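(* Let $w>0$ and let $\rho_1,\rho_2:\mathbb R\to[0,\infty)$ be bounded unnormalised densities which are quasi-concave (every level set $\{x:\rho_i(x)\ge t\}$ is an interval) with nonempty $\arg\max\rho_i$ and \[ \inf_{r\in\arg\max\rho_1,\ s\in\arg\max\rho_2}|r-s|<w . \] Then $\rho_{\max}:=\max\{\rho_1,\rho_2\}\in\mathcal R_w$.
   Context: For $w>0$ and $\rho:\mathbb R\to[0,\infty)$ with level sets $K(t)=\{x:\rho(x)\ge t\}$, we write $\rho\in\mathcal R_w$ if there exist $t_1\le t_2$ in $[0,\|\rho\|_\infty]$ such that: (a) for all $t\in[0,t_1]\cup(t_2,\|\rho\|_\infty]$, $K(t)$ is an interval; (b) for all $t\in(t_1,t_2]$ there are disjoint intervals $K_1(t),K_2(t)$ with $K(t)=K_1(t)\cup K_2(t)$ and $K_i(t+\varepsilon)\subseteq K_i(t)$ for all $\varepsilon>0$, $i=1,2$; (c) for all $t\in[0,\|\rho\|_\infty]$, $\delta_t<w$, where $\delta_t=\inf_{r\in K_1(t),s\in K_2(t)}|r-s|$ for $t\in(t_1,t_2]$ and $\delta_t=0$ otherwise. *)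

theory Defs
  imports "HOL-Analysis.Analysis" "HOL-Library.Extended_Real"
begin

definition level_set :: "(real \<Rightarrow> real) \<Rightarrow> real \<Rightarrow> real set" where
  "level_set \<rho> t = {x. \<rho> x \<ge> t}"

definition sup_norm :: "(real \<Rightarrow> real) \<Rightarrow> real" where
  "sup_norm \<rho> = Sup (range \<rho>)"

definition arg_max_set :: "(real \<Rightarrow> real) \<Rightarrow> real set" where
  "arg_max_set \<rho> = {x. \<forall>y. \<rho> y \<le> \<rho> x}"

(* delta_t: infimum distance between K1(t) and K2(t) for t in (t1,t2], 0 otherwise;
   taken in ereal so that the infimum of the empty set is +infinity *)
definition delta_gap :: "(real \<Rightarrow> real set) \<Rightarrow> (real \<Rightarrow> real set) \<Rightarrow> real \<Rightarrow> real \<Rightarrow> real \<Rightarrow> ereal" where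
  "delta_gap K1 K2 t1 t2 t =
     (if t \<in> {t1<..t2} then Inf {ereal \<bar>r - s\<bar> | r s. r \<in> K1 t \<and> s \<in> K2 t} else 0)"

definition in_R :: "real \<Rightarrow> (real \<Rightarrow> real) \<Rightarrow> bool" where
  "in_R w \<rho> \<longleftrightarrow> (\<forall>x. 0 \<le> \<rho> x) \<and>
     (\<exists>t1 t2 K1 K2. 0 \<le> t1 \<and> t1 \<le> t2 \<and> t2 \<le> sup_norm \<rho> \<and>
        (\<forall>t \<in> {0..t1} \<union> {t2<..sup_norm \<rho>}. is_interval (level_set \<rho> t)) \<and>
        (\<forall>t \<in> {t1<..t2}. is_interval (K1 t) \<and> is_interval (K2 t) \<and> K1 t \<inter> K2 t = {} \<and>
             level_set \<rho> t = K1 t \<union> K2 t \<and>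
             (\<forall>\<epsilon>>0. t + \<epsilon> \<in> {t1<..t2} \<longrightarrow> K1 (t + \<epsilon>) \<subseteq> K1 t \<and> K2 (t + \<epsilon>) \<subseteq> K2 t)) \<and>
        (\<forall>t \<in> {0..sup_norm \<rho>}. delta_gap K1 K2 t1 t2 t < ereal w))"

end

theory Submission
  imports Defs
begin

(* Write L1 t, L2 t for the level sets of rho1, rho2; the level
   set of rho = max rho1 rho2 at height t is L1 t \<union> L2 t.  Pick maximisers a, b of
   rho1, rho2 with |a - b| < w and put m = min (rho1 a) (rho2 b).
   - Above m one of L1 t, L2 t is empty, so the level set of rho is an interval.
   - Let t1 be the supremum of the heights in (0, m] at which L1 t and L2 t meet.
     Below t1 they meet (the level sets shrink as t grows), so their union is an
     interval; at t1 itself this survives because a level set is the intersection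
     of all lower ones.
   - On (t1, m] the sets L1 t, L2 t are disjoint intervals, decreasing in t, and both
     contain the maximisers a resp. b, so their distance is at most |a - b| < w.
   Hence rho \<in> R_w with the witnesses t1, t2 = m, K1 = L1, K2 = L2.
   The file first collects general facts about level sets, then studies the merge
   height t1 of two families of level sets, and finally assembles the theorem. *)

lemma level_set_antimono:
  "s \<le> t \<Longrightarrow> level_set f t \<subseteq> level_set f s"
  by (auto simp: level_set_def)

lemma level_set_max:
  "level_set (\<lambda>x. max (f x) (g x)) t = level_set f t \<union> level_set g t"
  by (auto simp: level_set_def)

lemma level_set_nonpos:
  assumes "\<And>x. 0 \<le> f x" and "t \<le> 0"
  shows "level_set f t = UNIV"
  using assms by (auto simp: level_set_def intro: order_trans)

lemma level_set_above_max:
  assumes "a \<in> arg_max_set f" and "f a < t"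
  shows "level_set f t = {}"
proof -
  have "f x < t" for x
    using assms by (auto simp: arg_max_set_def intro: le_less_trans)
  then show ?thesis by (auto simp: level_set_def not_le[symmetric])
qed

lemma level_set_eq_Inter_below:
  assumes "c < t"
  shows "level_set f t = (\<Inter>s\<in>{c<..<t}. level_set f s)"
proof
  show "level_set f t \<subseteq> (\<Inter>s\<in>{c<..<t}. level_set f s)"
    by (auto simp: level_set_def)
  show "(\<Inter>s\<in>{c<..<t}. level_set f s) \<subseteq> level_set f t"
  proof
    fix x assume "x \<in> (\<Inter>s\<in>{c<..<t}. level_set f s)"
    then have "t \<le> f x"
      by (intro dense_le_bounded[OF assms]) (auto simp: level_set_def)
    then show "x \<in> level_set f t" by (simp add: level_set_def)
  qed
qed

lemma is_interval_level_set_from_below: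
  assumes "c < t" and "\<And>s. c < s \<Longrightarrow> s < t \<Longrightarrow> is_interval (level_set f s)"
  shows "is_interval (level_set f t)"
  unfolding level_set_eq_Inter_below[OF assms(1)] is_interval_convex_1
  using assms(2) by (intro convex_INT) (auto simp: is_interval_convex_1)

lemma le_sup_norm: "bdd_above (range f) \<Longrightarrow> f x \<le> sup_norm f"
  unfolding sup_norm_def by (rule cSup_upper) auto

lemma is_interval_Un_overlap:
  fixes A B :: "real set"
  assumes "is_interval A" "is_interval B" "A \<inter> B \<noteq> {}"
  shows "is_interval (A \<union> B)"
  using assms by (simp add: is_interval_connected_1 connected_Un)

lemma close_points_of_Inf_dist:
  fixes A B :: "real set"
  assumes "A \<noteq> {}" "B \<noteq> {}" and "Inf {\<bar>r - s\<bar> | r s. r \<in> A \<and> s \<in> B} < w"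
  obtains a b where "a \<in> A" "b \<in> B" "\<bar>a - b\<bar> < w"
proof -
  let ?D = "{\<bar>r - s\<bar> | r s. r \<in> A \<and> s \<in> B}"
  have "?D \<noteq> {}" using assms(1,2) by blast
  moreover have "bdd_below ?D" by (rule bdd_belowI[of _ 0]) auto
  ultimately obtain d where "d \<in> ?D" "d < w" using cInf_lessD[OF _ assms(3)] by blast
  then show thesis using that by blast
qed

definition merge_height :: "(real \<Rightarrow> real) \<Rightarrow> (real \<Rightarrow> real) \<Rightarrow> real \<Rightarrow> real" where
  "merge_height f g m =
     Sup (insert 0 {t. 0 < t \<and> t \<le> m \<and> level_set f t \<inter> level_set g t \<noteq> {}})"

lemma merge_height_nonneg: "0 \<le> merge_height f g m"
proof -
  let ?T = "insert 0 {t. 0 < t \<and> t \<le> m \<and> level_set f t \<inter> level_set g t \<noteq> {}}"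
  have "bdd_above ?T" by (rule bdd_aboveI[of _ "max 0 m"]) auto
  then show ?thesis unfolding merge_height_def by (intro cSup_upper) auto
qed

lemma merge_height_le: "0 \<le> m \<Longrightarrow> merge_height f g m \<le> m"
  unfolding merge_height_def by (intro cSup_least) auto

(* Strictly below the merge height the level sets overlap, since they shrink with t. *)
lemma overlap_below_merge_height:
  assumes "0 < s" and "s < merge_height f g m"
  shows "level_set f s \<inter> level_set g s \<noteq> {}"
proof -
  obtain u where u: "u \<in> insert 0 {t. 0 < t \<and> t \<le> m \<and> level_set f t \<inter> level_set g t \<noteq> {}}"
    and "s < u"
    using less_cSupD[OF _ assms(2)[unfolded merge_height_def]] by blast
  then have "level_set f u \<inter> level_set g u \<noteq> {}" using assms(1) by auto
  moreover have "level_set f u \<subseteq> level_set f s" "level_set g u \<subseteq> level_set g s"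
    using \<open>s < u\<close> by (simp_all add: level_set_antimono)
  ultimately show ?thesis by blast
qed

lemma disjoint_above_merge_height:
  assumes "merge_height f g m < t" and "t \<le> m"
  shows "level_set f t \<inter> level_set g t = {}"
proof (rule ccontr)
  let ?T = "insert 0 {t. 0 < t \<and> t \<le> m \<and> level_set f t \<inter> level_set g t \<noteq> {}}"
  assume "level_set f t \<inter> level_set g t \<noteq> {}"
  moreover have "0 \<le> m" "0 < t"
    using assms merge_height_nonneg[of f g m] by linarith+
  ultimately have "t \<in> ?T" using assms(2) by blast
  moreover have "bdd_above ?T" by (rule bdd_aboveI[of _ m]) (auto simp: \<open>0 \<le> m\<close>)
  ultimately have "t \<le> merge_height f g m" unfolding merge_height_def by (rule cSup_upper)
  then show False using assms(1) by simp
qed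

lemma is_interval_Un_up_to_merge_height:
  assumes "\<And>x. 0 \<le> f x"
    and "\<And>t. is_interval (level_set f t)" and "\<And>t. is_interval (level_set g t)"
    and "t \<le> merge_height f g m"
  shows "is_interval (level_set (\<lambda>x. max (f x) (g x)) t)"
proof (cases "t \<le> 0")
  case True
  have "level_set (\<lambda>x. max (f x) (g x)) t = UNIV"
    using assms(1) True by (intro level_set_nonpos) (auto intro: max.coboundedI1)
  then show ?thesis by simp
next
  case False
  show ?thesis
  proof (rule is_interval_level_set_from_below[of 0])
    show "0 < t" using False by simp
    fix s assume "0 < s" "s < t"
    then show "is_interval (level_set (\<lambda>x. max (f x) (g x)) s)"
      unfolding level_set_max using assms(2-4)
      by (intro is_interval_Un_overlap overlap_below_merge_height[of s f g m]) auto
  qed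
qed

(* Above the smaller of the two peak values one level set is empty, so the level
   set of the maximum is a single interval. *)
lemma is_interval_level_set_max_above_peaks:
  assumes "a \<in> arg_max_set f" "b \<in> arg_max_set g" and "min (f a) (g b) < t"
    and "\<And>t. is_interval (level_set f t)" and "\<And>t. is_interval (level_set g t)"
  shows "is_interval (level_set (\<lambda>x. max (f x) (g x)) t)"
proof -
  have "level_set f t = {} \<or> level_set g t = {}"
    using level_set_above_max[OF assms(1), of t] level_set_above_max[OF assms(2), of t] assms(3)
    unfolding min_less_iff_disj by blast
  then show ?thesis using assms(4,5) by (auto simp: level_set_max)
qed

lemma level_sets_split_above_merge_height:
  assumes "\<And>t. is_interval (level_set f t)" and "\<And>t. is_interval (level_set g t)"
    and "t \<in> {merge_height f g m<..m}"
  shows "is_interval (level_set f t) \<and> is_interval (level_set g t) \<and>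
      level_set f t \<inter> level_set g t = {} \<and>
      level_set (\<lambda>x. max (f x) (g x)) t = level_set f t \<union> level_set g t \<and>
      (\<forall>\<epsilon>>0. t + \<epsilon> \<in> {merge_height f g m<..m} \<longrightarrow>
         level_set f (t + \<epsilon>) \<subseteq> level_set f t \<and> level_set g (t + \<epsilon>) \<subseteq> level_set g t)"
  using assms disjoint_above_merge_height[of f g m t]
  by (simp add: level_set_max level_set_antimono)

lemma delta_gap_below_witness:
  assumes "\<And>t. t \<in> {t1<..t2} \<Longrightarrow> a \<in> K1 t \<and> b \<in> K2 t" and "\<bar>a - b\<bar> < w" and "0 < w"
  shows "delta_gap K1 K2 t1 t2 t < ereal w"
proof (cases "t \<in> {t1<..t2}")
  case True
  then have "Inf {ereal \<bar>r - s\<bar> | r s. r \<in> K1 t \<and> s \<in> K2 t} \<le> ereal \<bar>a - b\<bar>"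
    using assms(1) by (intro Inf_lower) blast
  also have "\<dots> < ereal w" using assms(2) by simp
  finally show ?thesis using True by (simp add: delta_gap_def)
next
  case False
  then show ?thesis using assms(3) by (auto simp: delta_gap_def)
qed

theorem lemma4p1:
  fixes w :: real and \<rho>1 \<rho>2 :: "real \<Rightarrow> real"
  assumes "w > 0"
    and "\<And>x. 0 \<le> \<rho>1 x" and "\<And>x. 0 \<le> \<rho>2 x"
    and "bdd_above (range \<rho>1)" and "bdd_above (range \<rho>2)"
    and "\<And>t. is_interval (level_set \<rho>1 t)" and "\<And>t. is_interval (level_set \<rho>2 t)"
    and "arg_max_set \<rho>1 \<noteq> {}" and "arg_max_set \<rho>2 \<noteq> {}"
    and "Inf {\<bar>r - s\<bar> | r s. r \<in> arg_max_set \<rho>1 \<and> s \<in> arg_max_set \<rho>2} < w"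
  shows "in_R w (\<lambda>x. max (\<rho>1 x) (\<rho>2 x))"
proof -
  define \<rho> where "\<rho> = (\<lambda>x. max (\<rho>1 x) (\<rho>2 x))"
  obtain a b where a: "a \<in> arg_max_set \<rho>1" and b: "b \<in> arg_max_set \<rho>2" and ab: "\<bar>a - b\<bar> < w"
    using close_points_of_Inf_dist[OF assms(8-10)] by blast
  define m where "m = min (\<rho>1 a) (\<rho>2 b)"
  define t1 where "t1 = merge_height \<rho>1 \<rho>2 m"
  have "0 \<le> m" using assms(2,3) by (simp add: m_def)
  then have t1_bounds: "0 \<le> t1" "t1 \<le> m"
    unfolding t1_def by (simp_all add: merge_height_nonneg merge_height_le)
  have "\<rho>1 a \<le> sup_norm \<rho>"
    using assms(4,5) le_sup_norm[of \<rho> a] by (simp add: \<rho>_def flip: sup_max)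
  then have m_le: "m \<le> sup_norm \<rho>" by (simp add: m_def)
  have intervals: "is_interval (level_set \<rho> t)" if "t \<in> {0..t1} \<union> {m<..sup_norm \<rho>}" for t
    using that is_interval_Un_up_to_merge_height[OF assms(2,6,7), of t m]
      is_interval_level_set_max_above_peaks[OF a b _ assms(6,7), of t]
    by (auto simp: \<rho>_def t1_def m_def)
  have "a \<in> level_set \<rho>1 t \<and> b \<in> level_set \<rho>2 t" if "t \<in> {t1<..m}" for t
    using that by (simp add: level_set_def m_def)
  then have gap: "delta_gap (level_set \<rho>1) (level_set \<rho>2) t1 m t < ereal w" for t
    using ab assms(1) by (rule delta_gap_below_witness)
  have nonneg: "\<forall>x. 0 \<le> \<rho> x" using assms(2) by (simp add: \<rho>_def max.coboundedI1)
  show ?thesis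
    unfolding in_R_def \<rho>_def[symmetric]
  proof (rule conjI[OF nonneg], rule exI[of _ t1], rule exI[of _ m],
      rule exI[of _ "level_set \<rho>1"], rule exI[of _ "level_set \<rho>2"])
  qed (use t1_bounds m_le intervals gap
          level_sets_split_above_merge_height[OF assms(6,7), where m=m, folded \<rho>_def t1_def]
        in \<open>simp_all add: ball_Un\<close>)
qed

end
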